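(* Let $\mathcal L$ be either FO or MSO, let $k\ge 0$, let $\sigma,\sigma'$ be disjoint vocabularies, $\mathfrak C$ a class of finite $\sigma'$-structures and $\mathcal D$ a class of finite $\sigma$-structures. Let $\mathcal A\in\mathcal D$ and $\mathcal B\in\mathfrak C$ with $\mathrm{dom}(\mathcal A)=\mathrm{dom}(\mathcal B)$, and let $\psi_{(\mathcal A,\mathcal B)}$ be the disjunction of the sentences $\mathrm{tp}^k_{\mathcal L}(\mathcal A',\mathcal B')$ over all $\mathcal A'\in\mathcal D$, $\mathcal B'\in\mathfrak C$ with $\mathrm{dom}(\mathcal A')=\mathrm{dom}(\mathcal B')$ such that $(\mathcal A',\mathcal B')$ is a $k$-flip of $(\mathcal A,\mathcal B)$ under $(\mathcal L,\mathcal D,\mathfrak C)$. Then: (1) for every $\mathcal A'\in\mathcal D$ and $\mathcal B'\in\mathfrak C$ with $\mathrm{dom}(\mathcal A')=\mathrm{dom}(\mathcal B')$, $(\mathcal A',\mathcal B')\models\psi_{(\mathcal A,\mathcal B)}$ if and only if $(\mathcal A',\mathcal B')$ is a $k$-flip of $(\mathcal A,\mathcal B)$ under $(\mathcal L,\mathcal D,\mathfrak C)$; (2) $\psi_{(\mathcal A,\mathcal B)}$ is an $\mathcal L$-sentence of quantifier rank at most $k$ that is $\mathfrak C$-invariant over $\mathcal D$; (3) for every $\mathcal A'\in\mathcal D$, $\mathrm{tp}^k_{\mathrm{inv}(\mathcal L+\{\mathfrak C\})^{\mathcal D}}(\mathcal A)=\mathrm{tp}^k_{\mathrm{inv}(\mathcal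 L+\{\mathfrak C\})^{\mathcal D}}(\mathcal A')$ if and only if $\mathcal A'\in Q_{\psi_{(\mathcal A,\mathcal B)}}$.
   Context: All structures are finite; vocabularies consist of relation and constant symbols. For a $\sigma$-structure $\mathcal A$ and a $\sigma'$-structure $\mathcal B$ with the same domain, $(\mathcal A,\mathcal B)$ denotes the $(\sigma\cup\sigma')$-structure on that domain interpreting $\sigma$ as in $\mathcal A$ and $\sigma'$ as in $\mathcal B$. $\mathrm{tp}^k_{\mathcal L}(\mathcal M)$ is the set of $\mathcal L$-sentences of quantifier rank at most $k$ true in $\mathcal M$; up to logical equivalence it is finite and is identified with the single sentence given by the conjunction of its members (so there are finitely many such types and the disjunction above is finite up to equivalence). An $\mathcal L$-sentence $\varphi$ over $\sigma\cup\sigma'$ is $\mathfrak C$-invariant over $\mathcal D$ if for every $\mathcal A\in\mathcal D$ and all $\mathcal B_1,\mathcal B_2\in\mathfrak C$ with domain $\mathrm{dom}(\mathcal A)$, $(\mathcal A,\mathcal B_1)\models\varphi$ iff $(\mathcal A,\mathcal B_2)\models\varphi$; such $\varphi$ defines $Q_\varphi=\{\mathcal A\in\mathcal D : (\mathcal A,\mathcal B)\models\varphi$ for some (equivalently all) $\mathcal B\in\mathfrak C$ with $\mathrm{dom}(\mathcal B)=\mathrm{dom}(\mathcal A)\}$. The type $\mathrm{tp}^k_{\mathrm{inv}(\mathcal L+\{\mathfrak C\})^{\mathcal D}}(\mathcal A)$ is the set of all $\mathfrak C$-invariant over $\mathcal D$ $\mathcal L$-sentences $\varphi$ of quantifier rank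 at most $k$ with $\mathcal A\in Q_\varphi$. For pairs $(\mathcal A,\mathcal B),(\mathcal A',\mathcal B')$ with $\mathcal A,\mathcal A'\in\mathcal D$, $\mathcal B,\mathcal B'\in\mathfrak C$ and shared domains, $(\mathcal A,\mathcal B)\sim_k(\mathcal A',\mathcal B')$ means $\mathcal A=\mathcal A'$ or $\mathrm{tp}^k_{\mathcal L}(\mathcal A,\mathcal B)=\mathrm{tp}^k_{\mathcal L}(\mathcal A',\mathcal B')$; a $k$-flip of $(\mathcal A,\mathcal B)$ under $(\mathcal L,\mathcal D,\mathfrak C)$ is any pair reachable from $(\mathcal A,\mathcal B)$ by a finite sequence of $\sim_k$ steps. *)

theory Defs
  imports Main
begin

text \<open>A relation symbol is a pair (name, arity). A vocabulary is a pair
 (set of relation symbols, set of constant symbols).\<close>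

type_synonym ('r,'c) voc = "('r \<times> nat) set \<times> 'c set"

definition rels :: "('r,'c) voc \<Rightarrow> ('r \<times> nat) set" where "rels \<sigma> = fst \<sigma>"
definition consts_of :: "('r,'c) voc \<Rightarrow> 'c set" where "consts_of \<sigma> = snd \<sigma>"

definition voc_union :: "('r,'c) voc \<Rightarrow> ('r,'c) voc \<Rightarrow> ('r,'c) voc" where
  "voc_union \<sigma> \<sigma>' = (rels \<sigma> \<union> rels \<sigma>', consts_of \<sigma> \<union> consts_of \<sigma>')"

definition voc_disjoint :: "('r,'c) voc \<Rightarrow> ('r,'c) voc \<Rightarrow> bool" where
  "voc_disjoint \<sigma> \<sigma>' \<longleftrightarrow> rels \<sigma> \<inter> rels \<sigma>' = {} \<and> consts_of \<sigma> \<inter> consts_of \<sigma>' = {}"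

definition voc_finite :: "('r,'c) voc \<Rightarrow> bool" where
  "voc_finite \<sigma> \<longleftrightarrow> finite (rels \<sigma>) \<and> finite (consts_of \<sigma>)"

record ('a,'r,'c) struc =
  sdom :: "'a set"
  srel :: "'r \<times> nat \<Rightarrow> 'a list \<Rightarrow> bool"
  scst :: "'c \<Rightarrow> 'a"

text \<open>A finite \<sigma>-structure: finite nonempty domain, constants interpreted in the
 domain, relations interpreted as sets of tuples of the right length over the domain;
 symbols outside \<sigma> get a canonical trivial interpretation (so that structures are
 determined by their \<sigma>-part and equality of structures is the intended one).\<close>

definition is_struc :: "('r,'c) voc \<Rightarrow> ('a,'r,'c) struc \<Rightarrow> bool" where
  "is_struc \<sigma> M \<longleftrightarrow> finite (sdom M) \<and> sdom M \<noteq> {}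
     \<and> (\<forall>c \<in> consts_of \<sigma>. scst M c \<in> sdom M)
     \<and> (\<forall>c. c \<notin> consts_of \<sigma> \<longrightarrow> scst M c = undefined)
     \<and> (\<forall>R ts. srel M R ts \<longrightarrow> R \<in> rels \<sigma> \<and> length ts = snd R \<and> set ts \<subseteq> sdom M)"

definition expand :: "('r,'c) voc \<Rightarrow> ('a,'r,'c) struc \<Rightarrow> ('a,'r,'c) struc \<Rightarrow> ('a,'r,'c) struc" where
  "expand \<sigma> A B = \<lparr> sdom = sdom A,
     srel = (\<lambda>R ts. if R \<in> rels \<sigma> then srel A R ts else srel B R ts),
     scst = (\<lambda>c. if c \<in> consts_of \<sigma> then scst A c else scst B c) \<rparr>"

datatype 'c trm = Var nat | Cst 'c

datatype ('r,'c) fm =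
    Top
  | Eq "'c trm" "'c trm"
  | Rel "'r \<times> nat" "'c trm list"
  | Mem "'c trm" nat          \<comment> \<open>first-order term belongs to a set variable\<close>
  | Neg "('r,'c) fm"
  | Conj "('r,'c) fm" "('r,'c) fm"
  | Disj "('r,'c) fm" "('r,'c) fm"
  | Ex nat "('r,'c) fm"
  | All nat "('r,'c) fm"
  | ExS nat "('r,'c) fm"
  | AllS nat "('r,'c) fm"

datatype logic = FO | MSO

fun qr :: "('r,'c) fm \<Rightarrow> nat" where
  "qr Top = 0"
| "qr (Eq s t) = 0"
| "qr (Rel R ts) = 0"
| "qr (Mem t X) = 0"
| "qr (Neg \<phi>) = qr \<phi>"
| "qr (Conj \<phi> \<psi>) = max (qr \<phi>) (qr \<psi>)"
| "qr (Disj \<phi> \<psi>) = max (qr \<phi>) (qr \<psi>)"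
| "qr (Ex x \<phi>) = Suc (qr \<phi>)"
| "qr (All x \<phi>) = Suc (qr \<phi>)"
| "qr (ExS X \<phi>) = Suc (qr \<phi>)"
| "qr (AllS X \<phi>) = Suc (qr \<phi>)"

fun is_FO :: "('r,'c) fm \<Rightarrow> bool" where
  "is_FO (Mem t X) = False"
| "is_FO (ExS X \<phi>) = False"
| "is_FO (AllS X \<phi>) = False"
| "is_FO (Neg \<phi>) = is_FO \<phi>"
| "is_FO (Conj \<phi> \<psi>) = (is_FO \<phi> \<and> is_FO \<psi>)"
| "is_FO (Disj \<phi> \<psi>) = (is_FO \<phi> \<and> is_FO \<psi>)"
| "is_FO (Ex x \<phi>) = is_FO \<phi>"
| "is_FO (All x \<phi>) = is_FO \<phi>"
| "is_FO _ = True"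

definition in_logic :: "logic \<Rightarrow> ('r,'c) fm \<Rightarrow> bool" where
  "in_logic L \<phi> \<longleftrightarrow> (L = FO \<longrightarrow> is_FO \<phi>)"

fun tvars :: "'c trm \<Rightarrow> nat set" where
  "tvars (Var i) = {i}" | "tvars (Cst c) = {}"

fun tconsts :: "'c trm \<Rightarrow> 'c set" where
  "tconsts (Var i) = {}" | "tconsts (Cst c) = {c}"

fun fv1 :: "('r,'c) fm \<Rightarrow> nat set" where
  "fv1 Top = {}"
| "fv1 (Eq s t) = tvars s \<union> tvars t"
| "fv1 (Rel R ts) = (\<Union>t\<in>set ts. tvars t)"
| "fv1 (Mem t X) = tvars t"
| "fv1 (Neg \<phi>) = fv1 \<phi>"
| "fv1 (Conj \<phi> \<psi>) = fv1 \<phi> \<union> fv1 \<psi>"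
| "fv1 (Disj \<phi> \<psi>) = fv1 \<phi> \<union> fv1 \<psi>"
| "fv1 (Ex x \<phi>) = fv1 \<phi> - {x}"
| "fv1 (All x \<phi>) = fv1 \<phi> - {x}"
| "fv1 (ExS X \<phi>) = fv1 \<phi>"
| "fv1 (AllS X \<phi>) = fv1 \<phi>"

fun fv2 :: "('r,'c) fm \<Rightarrow> nat set" where
  "fv2 (Mem t X) = {X}"
| "fv2 (Neg \<phi>) = fv2 \<phi>"
| "fv2 (Conj \<phi> \<psi>) = fv2 \<phi> \<union> fv2 \<psi>"
| "fv2 (Disj \<phi> \<psi>) = fv2 \<phi> \<union> fv2 \<psi>"
| "fv2 (Ex x \<phi>) = fv2 \<phi>"
| "fv2 (All x \<phi>) = fv2 \<phi>"
| "fv2 (ExS X \<phi>) = fv2 \<phi> - {X}"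
| "fv2 (AllS X \<phi>) = fv2 \<phi> - {X}"
| "fv2 _ = {}"

fun in_voc :: "('r,'c) voc \<Rightarrow> ('r,'c) fm \<Rightarrow> bool" where
  "in_voc \<tau> Top = True"
| "in_voc \<tau> (Eq s t) = (tconsts s \<union> tconsts t \<subseteq> consts_of \<tau>)"
| "in_voc \<tau> (Rel R ts) = (R \<in> rels \<tau> \<and> length ts = snd R \<and> (\<Union>t\<in>set ts. tconsts t) \<subseteq> consts_of \<tau>)"
| "in_voc \<tau> (Mem t X) = (tconsts t \<subseteq> consts_of \<tau>)"
| "in_voc \<tau> (Neg \<phi>) = in_voc \<tau> \<phi>"
| "in_voc \<tau> (Conj \<phi> \<psi>) = (in_voc \<tau> \<phi> \<and> in_voc \<tau> \<psi>)"
| "in_voc \<tau> (Disj \<phi> \<psi>) = (in_voc \<tau> \<phi> \<and> in_voc \<tau> \<psi>)"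
| "in_voc \<tau> (Ex x \<phi>) = in_voc \<tau> \<phi>"
| "in_voc \<tau> (All x \<phi>) = in_voc \<tau> \<phi>"
| "in_voc \<tau> (ExS X \<phi>) = in_voc \<tau> \<phi>"
| "in_voc \<tau> (AllS X \<phi>) = in_voc \<tau> \<phi>"

fun teval :: "('a,'r,'c) struc \<Rightarrow> (nat \<Rightarrow> 'a) \<Rightarrow> 'c trm \<Rightarrow> 'a" where
  "teval M v (Var i) = v i"
| "teval M v (Cst c) = scst M c"

fun sat :: "('a,'r,'c) struc \<Rightarrow> (nat \<Rightarrow> 'a) \<Rightarrow> (nat \<Rightarrow> 'a set) \<Rightarrow> ('r,'c) fm \<Rightarrow> bool" where
  "sat M v V Top = True"
| "sat M v V (Eq s t) = (teval M v s = teval M v t)"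
| "sat M v V (Rel R ts) = srel M R (map (teval M v) ts)"
| "sat M v V (Mem t X) = (teval M v t \<in> V X)"
| "sat M v V (Neg \<phi>) = (\<not> sat M v V \<phi>)"
| "sat M v V (Conj \<phi> \<psi>) = (sat M v V \<phi> \<and> sat M v V \<psi>)"
| "sat M v V (Disj \<phi> \<psi>) = (sat M v V \<phi> \<or> sat M v V \<psi>)"
| "sat M v V (Ex x \<phi>) = (\<exists>a \<in> sdom M. sat M (v(x := a)) V \<phi>)"
| "sat M v V (All x \<phi>) = (\<forall>a \<in> sdom M. sat M (v(x := a)) V \<phi>)"
| "sat M v V (ExS X \<phi>) = (\<exists>S. S \<subseteq> sdom M \<and> sat M v (V(X := S)) \<phi>)"
| "sat M v V (AllS X \<phi>) = (\<forall>S. S \<subseteq> sdom M \<longrightarrow> sat M v (V(X := S)) \<phi>)"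

text \<open>Truth of a sentence (the assignments are irrelevant for sentences).\<close>
definition models :: "('a,'r,'c) struc \<Rightarrow> ('r,'c) fm \<Rightarrow> bool" where
  "models M \<phi> \<longleftrightarrow> sat M (\<lambda>_. undefined) (\<lambda>_. {}) \<phi>"

definition is_sentence :: "logic \<Rightarrow> nat \<Rightarrow> ('r,'c) voc \<Rightarrow> ('r,'c) fm \<Rightarrow> bool" where
  "is_sentence L k \<tau> \<phi> \<longleftrightarrow> in_logic L \<phi> \<and> qr \<phi> \<le> k \<and> fv1 \<phi> = {} \<and> fv2 \<phi> = {} \<and> in_voc \<tau> \<phi>"

definition tp :: "logic \<Rightarrow> nat \<Rightarrow> ('r,'c) voc \<Rightarrow> ('a,'r,'c) struc \<Rightarrow> ('r,'c) fm set" where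
  "tp L k \<tau> M = {\<phi>. is_sentence L k \<tau> \<phi> \<and> models M \<phi>}"

fun conj_list :: "('r,'c) fm list \<Rightarrow> ('r,'c) fm" where
  "conj_list [] = Top"
| "conj_list (\<phi> # \<phi>s) = Conj \<phi> (conj_list \<phi>s)"

fun disj_list :: "('r,'c) fm list \<Rightarrow> ('r,'c) fm" where
  "disj_list [] = Neg Top"
| "disj_list (\<phi> # \<phi>s) = Disj \<phi> (disj_list \<phi>s)"

text \<open>\<open>\<chi>\<close> is "the" single sentence identified with \<open>tp^k_\<L>(M)\<close>: a finite conjunction of
 members of the type which implies (over all \<tau>-structures) the whole type.\<close>
definition type_sentence :: "logic \<Rightarrow> nat \<Rightarrow> ('r,'c) voc \<Rightarrow> ('a,'r,'c) struc \<Rightarrow> ('r,'c) fm \<Rightarrow> bool" where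
  "type_sentence L k \<tau> M \<chi> \<longleftrightarrow>
     (\<exists>\<phi>s. set \<phi>s \<subseteq> tp L k \<tau> M \<and> \<chi> = conj_list \<phi>s
        \<and> (\<forall>N :: ('a,'r,'c) struc. is_struc \<tau> N \<longrightarrow> models N \<chi> \<longrightarrow> tp L k \<tau> N = tp L k \<tau> M))"

definition admissible :: "('r,'c) voc \<Rightarrow> ('a,'r,'c) struc set \<Rightarrow> ('a,'r,'c) struc set
    \<Rightarrow> ('a,'r,'c) struc \<times> ('a,'r,'c) struc \<Rightarrow> bool" where
  "admissible \<sigma> D C p \<longleftrightarrow> fst p \<in> D \<and> snd p \<in> C \<and> sdom (fst p) = sdom (snd p)"

definition sim_k :: "logic \<Rightarrow> nat \<Rightarrow> ('r,'c) voc \<Rightarrow> ('r,'c) voc \<Rightarrow> ('a,'r,'c) struc set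
    \<Rightarrow> ('a,'r,'c) struc set \<Rightarrow> ('a,'r,'c) struc \<times> ('a,'r,'c) struc
    \<Rightarrow> ('a,'r,'c) struc \<times> ('a,'r,'c) struc \<Rightarrow> bool" where
  "sim_k L k \<sigma> \<sigma>' D C p q \<longleftrightarrow> admissible \<sigma> D C p \<and> admissible \<sigma> D C q \<and>
     (fst p = fst q \<or>
      tp L k (voc_union \<sigma> \<sigma>') (expand \<sigma> (fst p) (snd p)) = tp L k (voc_union \<sigma> \<sigma>') (expand \<sigma> (fst q) (snd q)))"

definition is_flip :: "logic \<Rightarrow> nat \<Rightarrow> ('r,'c) voc \<Rightarrow> ('r,'c) voc \<Rightarrow> ('a,'r,'c) struc set
    \<Rightarrow> ('a,'r,'c) struc set \<Rightarrow> ('a,'r,'c) struc \<times> ('a,'r,'c) struc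
    \<Rightarrow> ('a,'r,'c) struc \<times> ('a,'r,'c) struc \<Rightarrow> bool" where
  "is_flip L k \<sigma> \<sigma>' D C p q \<longleftrightarrow> (sim_k L k \<sigma> \<sigma>' D C)\<^sup>*\<^sup>* p q"

definition C_invariant :: "('r,'c) voc \<Rightarrow> ('a,'r,'c) struc set \<Rightarrow> ('a,'r,'c) struc set
    \<Rightarrow> ('r,'c) fm \<Rightarrow> bool" where
  "C_invariant \<sigma> D C \<phi> \<longleftrightarrow> (\<forall>A\<in>D. \<forall>B1\<in>C. \<forall>B2\<in>C. sdom B1 = sdom A \<longrightarrow> sdom B2 = sdom A \<longrightarrow>
      (models (expand \<sigma> A B1) \<phi> \<longleftrightarrow> models (expand \<sigma> A B2) \<phi>))"

definition Q_of :: "('r,'c) voc \<Rightarrow> ('a,'r,'c) struc set \<Rightarrow> ('a,'r,'c) struc set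
    \<Rightarrow> ('r,'c) fm \<Rightarrow> ('a,'r,'c) struc set" where
  "Q_of \<sigma> D C \<phi> = {A \<in> D. \<exists>B\<in>C. sdom B = sdom A \<and> models (expand \<sigma> A B) \<phi>}"

definition inv_tp :: "logic \<Rightarrow> nat \<Rightarrow> ('r,'c) voc \<Rightarrow> ('r,'c) voc \<Rightarrow> ('a,'r,'c) struc set
    \<Rightarrow> ('a,'r,'c) struc set \<Rightarrow> ('a,'r,'c) struc \<Rightarrow> ('r,'c) fm set" where
  "inv_tp L k \<sigma> \<sigma>' D C A = {\<phi>. is_sentence L k (voc_union \<sigma> \<sigma>') \<phi> \<and> C_invariant \<sigma> D C \<phi> \<and> A \<in> Q_of \<sigma> D C \<phi>}"

text \<open>\<open>\<psi>\<close> is the (finite, up to equivalence) disjunction of the type sentences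
 \<open>tp^k_\<L>(A',B')\<close> over all k-flips (A',B') of (A,B): a finite list of type sentences
 of flips, covering the type of every flip.\<close>
definition is_psi :: "logic \<Rightarrow> nat \<Rightarrow> ('r,'c) voc \<Rightarrow> ('r,'c) voc \<Rightarrow> ('a,'r,'c) struc set
    \<Rightarrow> ('a,'r,'c) struc set \<Rightarrow> ('a,'r,'c) struc \<Rightarrow> ('a,'r,'c) struc \<Rightarrow> ('r,'c) fm \<Rightarrow> bool" where
  "is_psi L k \<sigma> \<sigma>' D C A B \<psi> \<longleftrightarrow>
     (\<exists>\<chi>s. \<psi> = disj_list \<chi>s
       \<and> (\<forall>\<chi>\<in>set \<chi>s. \<exists>p. is_flip L k \<sigma> \<sigma>' D C (A, B) p
                          \<and> type_sentence L k (voc_union \<sigma> \<sigma>') (expand \<sigma> (fst p) (snd p)) \<chi>)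
       \<and> (\<forall>p. is_flip L k \<sigma> \<sigma>' D C (A, B) p \<longrightarrow>
             (\<exists>\<chi>\<in>set \<chi>s. type_sentence L k (voc_union \<sigma> \<sigma>') (expand \<sigma> (fst p) (snd p)) \<chi>)))"

definition psi :: "logic \<Rightarrow> nat \<Rightarrow> ('r,'c) voc \<Rightarrow> ('r,'c) voc \<Rightarrow> ('a,'r,'c) struc set
    \<Rightarrow> ('a,'r,'c) struc set \<Rightarrow> ('a,'r,'c) struc \<Rightarrow> ('a,'r,'c) struc \<Rightarrow> ('r,'c) fm" where
  "psi L k \<sigma> \<sigma>' D C A B = (SOME \<psi>. is_psi L k \<sigma> \<sigma>' D C A B \<psi>)"

end

theory Submission
  imports Defs "HOL-Combinatorics.Transposition"
begin

text \<open>The k-flips of (A,B) form an equivalence class of pairs that is closed under changing the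
  expansion B and under replacing a pair by one with the same rank-k type. Hence the disjunction
  \<open>\<psi>\<close> of the types of all flips holds in exactly the flips and is \<open>\<frak>C\<close>-invariant, and every
  \<open>\<frak>C\<close>-invariant sentence of rank at most k has the same truth value on all flips; so \<open>\<psi>\<close>
  defines precisely the structures whose invariant type equals that of A. The only substantial
  point is that \<open>\<psi>\<close> exists at all, i.e. that there are finitely many rank-k types. This is the
  usual induction on k, for formulas whose free variables lie in fixed finite sets: a rank-(j+1)
  type is determined by its atomic part and by the rank-j types of its one-element (or one-set)
  extensions, once bound variables are renamed into a finite pool.\<close>

fun rename_trm :: "(nat \<Rightarrow> nat) \<Rightarrow> 'c trm \<Rightarrow> 'c trm" where
  "rename_trm f (Var i) = Var (f i)"
| "rename_trm f (Cst c) = Cst c"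

fun rename :: "(nat \<Rightarrow> nat) \<Rightarrow> (nat \<Rightarrow> nat) \<Rightarrow> ('r,'c) fm \<Rightarrow> ('r,'c) fm" where
  "rename f g Top = Top"
| "rename f g (Eq s t) = Eq (rename_trm f s) (rename_trm f t)"
| "rename f g (Rel R ts) = Rel R (map (rename_trm f) ts)"
| "rename f g (Mem t X) = Mem (rename_trm f t) (g X)"
| "rename f g (Neg \<phi>) = Neg (rename f g \<phi>)"
| "rename f g (Conj \<phi> \<psi>) = Conj (rename f g \<phi>) (rename f g \<psi>)"
| "rename f g (Disj \<phi> \<psi>) = Disj (rename f g \<phi>) (rename f g \<psi>)"
| "rename f g (Ex x \<phi>) = Ex (f x) (rename f g \<phi>)"
| "rename f g (All x \<phi>) = All (f x) (rename f g \<phi>)"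
| "rename f g (ExS X \<phi>) = ExS (g X) (rename f g \<phi>)"
| "rename f g (AllS X \<phi>) = AllS (g X) (rename f g \<phi>)"

lemma teval_rename_trm: "teval M v (rename_trm f t) = teval M (v \<circ> f) t"
  by (cases t) auto

lemma tvars_rename_trm [simp]: "tvars (rename_trm f t) = f ` tvars t"
  by (cases t) auto

lemma tconsts_rename_trm [simp]: "tconsts (rename_trm f t) = tconsts t"
  by (cases t) auto

lemma fun_upd_comp_inj: "inj f \<Longrightarrow> v(f x := a) \<circ> f = (v \<circ> f)(x := a)"
  by (auto simp: fun_eq_iff inj_eq)

lemma sat_rename:
  assumes "inj f" "inj g"
  shows "sat M v V (rename f g \<phi>) = sat M (v \<circ> f) (V \<circ> g) \<phi>"
proof (induction \<phi> arbitrary: v V)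
  case (Rel R ts)
  then show ?case by (simp add: comp_def teval_rename_trm)
qed (simp_all add: teval_rename_trm fun_upd_comp_inj assms)

lemma fv1_rename: "inj f \<Longrightarrow> fv1 (rename f g \<phi>) = f ` fv1 \<phi>"
  by (induction \<phi>) (auto simp: inj_eq image_UN)

lemma fv2_rename: "inj g \<Longrightarrow> fv2 (rename f g \<phi>) = g ` fv2 \<phi>"
  by (induction \<phi>) (auto simp: inj_eq)

lemma qr_rename [simp]: "qr (rename f g \<phi>) = qr \<phi>"
  by (induction \<phi>) auto

lemma in_logic_rename [simp]: "in_logic L (rename f g \<phi>) = in_logic L \<phi>"
proof -
  have "is_FO (rename f g \<phi>) = is_FO \<phi>" by (induction \<phi>) auto
  then show ?thesis by (simp add: in_logic_def)
qed

lemma in_voc_rename [simp]: "in_voc \<tau> (rename f g \<phi>) = in_voc \<tau> \<phi>"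
  by (induction \<phi>) auto

lemma teval_cong: "(\<forall>i\<in>tvars t. v i = v' i) \<Longrightarrow> teval M v t = teval M v' t"
  by (cases t) auto

lemma sat_cong:
  "(\<forall>i\<in>fv1 \<phi>. v i = v' i) \<Longrightarrow> (\<forall>X\<in>fv2 \<phi>. V X = V' X) \<Longrightarrow> sat M v V \<phi> = sat M v' V' \<phi>"
proof (induction \<phi> arbitrary: v v' V V')
  case (Eq s t)
  have "teval M v s = teval M v' s" "teval M v t = teval M v' t"
    using Eq by (auto intro: teval_cong)
  then show ?case by simp
next
  case (Rel R ts)
  have "map (teval M v) ts = map (teval M v') ts"
    using Rel by (intro map_cong refl teval_cong) auto
  then show ?case by (simp only: sat.simps)
next
  case (Mem t X)
  have "teval M v t = teval M v' t"
    using Mem by (auto intro: teval_cong)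
  then show ?case using Mem by simp
next
  case (Conj a b)
  have "sat M v V a = sat M v' V' a" "sat M v V b = sat M v' V' b"
    using Conj.prems by (intro Conj.IH; auto)+
  then show ?case by simp
next
  case (Disj a b)
  have "sat M v V a = sat M v' V' a" "sat M v V b = sat M v' V' b"
    using Disj.prems by (intro Disj.IH; auto)+
  then show ?case by simp
next
  case (Ex x \<phi>)
  have "\<And>a. sat M (v(x:=a)) V \<phi> = sat M (v'(x:=a)) V' \<phi>"
    using Ex.prems by (intro Ex.IH) auto
  then show ?case by simp
next
  case (All x \<phi>)
  have "\<And>a. sat M (v(x:=a)) V \<phi> = sat M (v'(x:=a)) V' \<phi>"
    using All.prems by (intro All.IH) auto
  then show ?case by simp
next
  case (ExS X \<phi>)
  have "\<And>S. sat M v (V(X:=S)) \<phi> = sat M v' (V'(X:=S)) \<phi>"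
    using ExS.prems by (intro ExS.IH) auto
  then show ?case by simp
next
  case (AllS X \<phi>)
  have "\<And>S. sat M v (V(X:=S)) \<phi> = sat M v' (V'(X:=S)) \<phi>"
    using AllS.prems by (intro AllS.IH) auto
  then show ?case by simp
qed auto

section \<open>Finitely many types\<close>

definition in_fragment :: "logic \<Rightarrow> nat \<Rightarrow> ('r,'c) voc \<Rightarrow> nat set \<Rightarrow> nat set \<Rightarrow> ('r,'c) fm \<Rightarrow> bool" where
  "in_fragment L k \<tau> V1 V2 \<phi> \<longleftrightarrow>
     in_logic L \<phi> \<and> qr \<phi> \<le> k \<and> fv1 \<phi> \<subseteq> V1 \<and> fv2 \<phi> \<subseteq> V2 \<and> in_voc \<tau> \<phi>"

lemma in_fragment_Neg [simp]: "in_fragment L k \<tau> V1 V2 (Neg \<phi>) = in_fragment L k \<tau> V1 V2 \<phi>"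
  by (simp add: in_fragment_def in_logic_def)

lemma in_fragment_Conj [simp]:
  "in_fragment L k \<tau> V1 V2 (Conj \<phi> \<psi>) = (in_fragment L k \<tau> V1 V2 \<phi> \<and> in_fragment L k \<tau> V1 V2 \<psi>)"
  by (auto simp: in_fragment_def in_logic_def)

lemma in_fragment_Disj [simp]:
  "in_fragment L k \<tau> V1 V2 (Disj \<phi> \<psi>) = (in_fragment L k \<tau> V1 V2 \<phi> \<and> in_fragment L k \<tau> V1 V2 \<psi>)"
  by (auto simp: in_fragment_def in_logic_def)

lemma in_fragment_quantifier_body:
  shows "in_fragment L (Suc j) \<tau> V1 V2 (Ex x \<psi>) \<Longrightarrow> in_fragment L j \<tau> (insert x V1) V2 \<psi>"
    and "in_fragment L (Suc j) \<tau> V1 V2 (All x \<psi>) \<Longrightarrow> in_fragment L j \<tau> (insert x V1) V2 \<psi>"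
    and "in_fragment L (Suc j) \<tau> V1 V2 (ExS X \<psi>) \<Longrightarrow> in_fragment L j \<tau> V1 (insert X V2) \<psi>"
    and "in_fragment L (Suc j) \<tau> V1 V2 (AllS X \<psi>) \<Longrightarrow> in_fragment L j \<tau> V1 (insert X V2) \<psi>"
  by (auto simp: in_fragment_def in_logic_def)

text \<open>Renaming a bound variable into a fixed finite pool keeps the free variables of quantifier
  bodies in a finite set.\<close>

lemma fo_bound_var_into_pool:
  fixes \<psi> :: "('r,'c) fm"
  assumes \<psi>: "in_fragment L j \<tau> (insert x V1) V2 \<psi>" and x0: "x0 \<notin> V1"
  obtains x' \<psi>' where "x' \<in> insert x0 V1" "in_fragment L j \<tau> (insert x0 V1) V2 \<psi>'"
    "\<And>(M :: ('a,'r,'c) struc) v V a. sat M (v(x := a)) V \<psi> = sat M (v(x' := a)) V \<psi>'"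
proof (cases "x \<in> insert x0 V1")
  case True
  then show ?thesis using \<psi> by (intro that[of x \<psi>]) (auto simp: in_fragment_def)
next
  case False
  let ?t = "Transposition.transpose x x0"
  have "fv1 (rename ?t id \<psi>) \<subseteq> insert x0 V1"
    using \<psi> False x0 by (auto simp: fv1_rename in_fragment_def transpose_def)
  then have "in_fragment L j \<tau> (insert x0 V1) V2 (rename ?t id \<psi>)"
    using \<psi> by (simp add: in_fragment_def fv2_rename)
  moreover have "sat M (v(x := a)) V \<psi> = sat M (v(x0 := a)) V (rename ?t id \<psi>)"
    for M :: "('a,'r,'c) struc" and v V a
    unfolding sat_rename[OF inj_transpose inj_on_id]
    by (rule sat_cong) (use \<psi> False x0 in \<open>auto simp: in_fragment_def transpose_def\<close>)
  ultimately show ?thesis by (intro that[of x0]) auto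
qed

lemma so_bound_var_into_pool:
  fixes \<psi> :: "('r,'c) fm"
  assumes \<psi>: "in_fragment L j \<tau> V1 (insert X V2) \<psi>" and X0: "X0 \<notin> V2"
  obtains X' \<psi>' where "X' \<in> insert X0 V2" "in_fragment L j \<tau> V1 (insert X0 V2) \<psi>'"
    "\<And>(M :: ('a,'r,'c) struc) v V S. sat M v (V(X := S)) \<psi> = sat M v (V(X' := S)) \<psi>'"
proof (cases "X \<in> insert X0 V2")
  case True
  then show ?thesis using \<psi> by (intro that[of X \<psi>]) (auto simp: in_fragment_def)
next
  case False
  let ?t = "Transposition.transpose X X0"
  have "fv2 (rename id ?t \<psi>) \<subseteq> insert X0 V2"
    using \<psi> False X0 by (auto simp: fv2_rename in_fragment_def transpose_def)
  then have "in_fragment L j \<tau> V1 (insert X0 V2) (rename id ?t \<psi>)"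
    using \<psi> by (simp add: in_fragment_def fv1_rename)
  moreover have "sat M v (V(X := S)) \<psi> = sat M v (V(X0 := S)) (rename id ?t \<psi>)"
    for M :: "('a,'r,'c) struc" and v V S
    unfolding sat_rename[OF inj_on_id inj_transpose]
    by (rule sat_cong) (use \<psi> False X0 in \<open>auto simp: in_fragment_def transpose_def\<close>)
  ultimately show ?thesis by (intro that[of X0]) auto
qed

definition fm_tp :: "logic \<Rightarrow> nat \<Rightarrow> ('r,'c) voc \<Rightarrow> nat set \<Rightarrow> nat set \<Rightarrow> ('a,'r,'c) struc
    \<Rightarrow> (nat \<Rightarrow> 'a) \<Rightarrow> (nat \<Rightarrow> 'a set) \<Rightarrow> ('r,'c) fm set" where
  "fm_tp L k \<tau> V1 V2 M v V = {\<phi>. in_fragment L k \<tau> V1 V2 \<phi> \<and> sat M v V \<phi>}"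

fun is_atom :: "('r,'c) fm \<Rightarrow> bool" where
  "is_atom Top = True"
| "is_atom (Eq s t) = True"
| "is_atom (Rel R ts) = True"
| "is_atom (Mem t X) = True"
| "is_atom _ = False"

fun is_quantified :: "('r,'c) fm \<Rightarrow> bool" where
  "is_quantified (Ex x \<phi>) = True"
| "is_quantified (All x \<phi>) = True"
| "is_quantified (ExS X \<phi>) = True"
| "is_quantified (AllS X \<phi>) = True"
| "is_quantified _ = False"

definition atoms :: "('r,'c) voc \<Rightarrow> nat set \<Rightarrow> nat set \<Rightarrow> ('r,'c) fm set" where
  "atoms \<tau> V1 V2 = {\<phi>. is_atom \<phi> \<and> fv1 \<phi> \<subseteq> V1 \<and> fv2 \<phi> \<subseteq> V2 \<and> in_voc \<tau> \<phi>}"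

definition atomic_tp :: "('r,'c) voc \<Rightarrow> nat set \<Rightarrow> nat set \<Rightarrow> ('a,'r,'c) struc
    \<Rightarrow> (nat \<Rightarrow> 'a) \<Rightarrow> (nat \<Rightarrow> 'a set) \<Rightarrow> ('r,'c) fm set" where
  "atomic_tp \<tau> V1 V2 M v V = {\<phi> \<in> atoms \<tau> V1 V2. sat M v V \<phi>}"

text \<open>The extension variable is recorded alongside each type, since it ranges over the whole
  pool \<open>insert x0 V1\<close> (resp. \<open>insert X0 V2\<close>), not only over the fresh \<open>x0\<close>.\<close>

definition fo_extension_tps :: "logic \<Rightarrow> nat \<Rightarrow> ('r,'c) voc \<Rightarrow> nat set \<Rightarrow> nat set \<Rightarrow> nat
    \<Rightarrow> ('a,'r,'c) struc \<Rightarrow> (nat \<Rightarrow> 'a) \<Rightarrow> (nat \<Rightarrow> 'a set) \<Rightarrow> (nat \<times> ('r,'c) fm set) set" where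
  "fo_extension_tps L j \<tau> V1 V2 x0 M v V =
     {(x, fm_tp L j \<tau> (insert x0 V1) V2 M (v(x := a)) V) | x a. x \<in> insert x0 V1 \<and> a \<in> sdom M}"

definition so_extension_tps :: "logic \<Rightarrow> nat \<Rightarrow> ('r,'c) voc \<Rightarrow> nat set \<Rightarrow> nat set \<Rightarrow> nat
    \<Rightarrow> ('a,'r,'c) struc \<Rightarrow> (nat \<Rightarrow> 'a) \<Rightarrow> (nat \<Rightarrow> 'a set) \<Rightarrow> (nat \<times> ('r,'c) fm set) set" where
  "so_extension_tps L j \<tau> V1 V2 X0 M v V =
     {(X, fm_tp L j \<tau> V1 (insert X0 V2) M v (V(X := S))) | X S. X \<in> insert X0 V2 \<and> S \<subseteq> sdom M}"

lemma sat_eq_if_eq_on_atoms_and_quantified: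
  assumes "\<And>\<psi>. in_fragment L k \<tau> V1 V2 \<psi> \<Longrightarrow> is_atom \<psi> \<or> is_quantified \<psi> \<Longrightarrow>
      sat M v V \<psi> = sat M' v' V' \<psi>"
  shows "in_fragment L k \<tau> V1 V2 \<phi> \<Longrightarrow> sat M v V \<phi> = sat M' v' V' \<phi>"
proof (induction \<phi>)
  case (Neg \<phi>)
  then show ?case by simp
next
  case (Conj \<phi> \<psi>)
  then show ?case by simp
next
  case (Disj \<phi> \<psi>)
  then show ?case by simp
qed (rule assms; simp)+

lemma sat_eq_if_atomic_tp_eq:
  assumes "atomic_tp \<tau> V1 V2 M v V = atomic_tp \<tau> V1 V2 M' v' V'"
    and "in_fragment L k \<tau> V1 V2 \<phi>" "is_atom \<phi>"
  shows "sat M v V \<phi> = sat M' v' V' \<phi>"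
proof -
  have "\<phi> \<in> atoms \<tau> V1 V2" using assms(2,3) by (auto simp: atoms_def in_fragment_def)
  then show ?thesis using assms(1) by (auto simp: atomic_tp_def set_eq_iff)
qed

lemma fm_tp_0_eq_if_atomic_tp_eq:
  assumes "atomic_tp \<tau> V1 V2 M v V = atomic_tp \<tau> V1 V2 M' v' V'"
  shows "fm_tp L 0 \<tau> V1 V2 M v V = fm_tp L 0 \<tau> V1 V2 M' v' V'"
proof -
  have "sat M v V \<psi> = sat M' v' V' \<psi>"
    if \<psi>: "in_fragment L 0 \<tau> V1 V2 \<psi>" and "is_atom \<psi> \<or> is_quantified \<psi>" for \<psi>
  proof -
    have "is_atom \<psi>" using that by (cases \<psi>) (auto simp: in_fragment_def)
    then show ?thesis by (rule sat_eq_if_atomic_tp_eq[OF assms \<psi>])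
  qed
  then show ?thesis
    unfolding fm_tp_def using sat_eq_if_eq_on_atoms_and_quantified by blast
qed

lemma fo_quantifiers_via_extension_tps:
  assumes "x \<in> insert x0 V1" "in_fragment L j \<tau> (insert x0 V1) V2 \<psi>"
  shows "(\<exists>a\<in>sdom M. sat M (v(x := a)) V \<psi>) \<longleftrightarrow>
        (\<exists>t. (x, t) \<in> fo_extension_tps L j \<tau> V1 V2 x0 M v V \<and> \<psi> \<in> t)"
    and "(\<forall>a\<in>sdom M. sat M (v(x := a)) V \<psi>) \<longleftrightarrow>
        (\<forall>t. (x, t) \<in> fo_extension_tps L j \<tau> V1 V2 x0 M v V \<longrightarrow> \<psi> \<in> t)"
  using assms by (auto simp: fo_extension_tps_def fm_tp_def)

lemma so_quantifiers_via_extension_tps: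
  assumes "X \<in> insert X0 V2" "in_fragment L j \<tau> V1 (insert X0 V2) \<psi>"
  shows "(\<exists>S. S \<subseteq> sdom M \<and> sat M v (V(X := S)) \<psi>) \<longleftrightarrow>
        (\<exists>t. (X, t) \<in> so_extension_tps L j \<tau> V1 V2 X0 M v V \<and> \<psi> \<in> t)"
    and "(\<forall>S. S \<subseteq> sdom M \<longrightarrow> sat M v (V(X := S)) \<psi>) \<longleftrightarrow>
        (\<forall>t. (X, t) \<in> so_extension_tps L j \<tau> V1 V2 X0 M v V \<longrightarrow> \<psi> \<in> t)"
  using assms by (auto simp: so_extension_tps_def fm_tp_def)

lemma fm_tp_Suc_eq_if_extension_tps_eq:
  fixes M M' :: "('a,'r,'c) struc"
  assumes x0: "x0 \<notin> V1" and X0: "X0 \<notin> V2"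
    and atomic: "atomic_tp \<tau> V1 V2 M v V = atomic_tp \<tau> V1 V2 M' v' V'"
    and fo: "fo_extension_tps L j \<tau> V1 V2 x0 M v V = fo_extension_tps L j \<tau> V1 V2 x0 M' v' V'"
    and so: "so_extension_tps L j \<tau> V1 V2 X0 M v V = so_extension_tps L j \<tau> V1 V2 X0 M' v' V'"
  shows "fm_tp L (Suc j) \<tau> V1 V2 M v V = fm_tp L (Suc j) \<tau> V1 V2 M' v' V'"
proof -
  have "sat M v V \<psi> = sat M' v' V' \<psi>"
    if \<psi>: "in_fragment L (Suc j) \<tau> V1 V2 \<psi>" and "is_atom \<psi> \<or> is_quantified \<psi>" for \<psi>
    using that(2)
  proof (cases \<psi>)
    case (Ex x \<chi>)
    obtain x' \<chi>' where "x' \<in> insert x0 V1" "in_fragment L j \<tau> (insert x0 V1) V2 \<chi>'"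
      and "\<And>(N :: ('a,'r,'c) struc) w W a. sat N (w(x := a)) W \<chi> = sat N (w(x' := a)) W \<chi>'"
      using fo_bound_var_into_pool in_fragment_quantifier_body(1) \<psi> Ex x0 by metis
    then show ?thesis using fo Ex by (simp add: fo_quantifiers_via_extension_tps(1))
  next
    case (All x \<chi>)
    obtain x' \<chi>' where "x' \<in> insert x0 V1" "in_fragment L j \<tau> (insert x0 V1) V2 \<chi>'"
      and "\<And>(N :: ('a,'r,'c) struc) w W a. sat N (w(x := a)) W \<chi> = sat N (w(x' := a)) W \<chi>'"
      using fo_bound_var_into_pool in_fragment_quantifier_body(2) \<psi> All x0 by metis
    then show ?thesis using fo All by (simp add: fo_quantifiers_via_extension_tps(2))
  next
    case (ExS X \<chi>)
    obtain X' \<chi>' where "X' \<in> insert X0 V2" "in_fragment L j \<tau> V1 (insert X0 V2) \<chi>'"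
      and "\<And>(N :: ('a,'r,'c) struc) w W S. sat N w (W(X := S)) \<chi> = sat N w (W(X' := S)) \<chi>'"
      using so_bound_var_into_pool in_fragment_quantifier_body(3) \<psi> ExS X0 by metis
    then show ?thesis using so ExS by (simp add: so_quantifiers_via_extension_tps(1))
  next
    case (AllS X \<chi>)
    obtain X' \<chi>' where "X' \<in> insert X0 V2" "in_fragment L j \<tau> V1 (insert X0 V2) \<chi>'"
      and "\<And>(N :: ('a,'r,'c) struc) w W S. sat N w (W(X := S)) \<chi> = sat N w (W(X' := S)) \<chi>'"
      using so_bound_var_into_pool in_fragment_quantifier_body(4) \<psi> AllS X0 by metis
    then show ?thesis using so AllS by (simp add: so_quantifiers_via_extension_tps(2))
  qed (use sat_eq_if_atomic_tp_eq[OF atomic \<psi>] in auto)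
  then show ?thesis
    unfolding fm_tp_def using sat_eq_if_eq_on_atoms_and_quantified by blast
qed

lemma finite_range_if_determined_by:
  assumes "finite (range F)" and "\<And>s s'. F s = F s' \<Longrightarrow> G s = G s'"
  shows "finite (range G)"
proof -
  define h where "h r = G (SOME s. F s = r)" for r
  have "G s = h (F s)" for s
    unfolding h_def by (rule assms(2)) (metis (mono_tags) someI_ex)
  then have "G = (\<lambda>s. h (F s))" by blast
  then show ?thesis using finite_range_imageI[OF assms(1)] by metis
qed

lemma finite_atoms:
  assumes "voc_finite \<tau>" "finite V1" "finite V2"
  shows "finite (atoms \<tau> V1 V2)"
proof -
  let ?T = "Var ` V1 \<union> Cst ` consts_of \<tau>"
  let ?Ts = "{ts. set ts \<subseteq> ?T \<and> length ts \<le> Max (snd ` rels \<tau>)}"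
  have T: "finite ?T" and rels: "finite (rels \<tau>)" using assms by (auto simp: voc_finite_def)
  have trm_in_T: "t \<in> ?T" if "tvars t \<subseteq> V1" "tconsts t \<subseteq> consts_of \<tau>" for t
    using that by (cases t) auto
  have "atoms \<tau> V1 V2 \<subseteq> {Top} \<union> {Eq s t | s t. s \<in> ?T \<and> t \<in> ?T}
      \<union> {Rel R ts | R ts. R \<in> rels \<tau> \<and> ts \<in> ?Ts} \<union> {Mem t X | t X. t \<in> ?T \<and> X \<in> V2}"
  proof
    fix \<phi> assume \<phi>: "\<phi> \<in> atoms \<tau> V1 V2"
    show "\<phi> \<in> {Top} \<union> {Eq s t | s t. s \<in> ?T \<and> t \<in> ?T}
      \<union> {Rel R ts | R ts. R \<in> rels \<tau> \<and> ts \<in> ?Ts} \<union> {Mem t X | t X. t \<in> ?T \<and> X \<in> V2}"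
    proof (cases \<phi>)
      case (Rel R ts)
      have "set ts \<subseteq> ?T"
      proof
        fix t assume "t \<in> set ts"
        then show "t \<in> ?T" using \<phi> Rel by (intro trm_in_T) (auto simp: atoms_def)
      qed
      moreover have "length ts \<le> Max (snd ` rels \<tau>)"
        using \<phi> Rel rels by (auto simp: atoms_def intro!: Max_ge)
      ultimately show ?thesis using \<phi> Rel by (cases R) (auto simp: atoms_def)
    qed (use \<phi> trm_in_T in \<open>auto simp: atoms_def\<close>)
  qed
  moreover have "finite {Eq s t | s t. s \<in> ?T \<and> t \<in> ?T}"
    using T by (intro finite_image_set2) auto
  moreover have "finite {Rel R ts | R ts. R \<in> rels \<tau> \<and> ts \<in> ?Ts}"
    using rels finite_lists_length_le[OF T] by (intro finite_image_set2) auto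
  moreover have "finite {Mem t X | t X. t \<in> ?T \<and> X \<in> V2}"
    using T assms(3) by (intro finite_image_set2) auto
  ultimately show ?thesis by (elim finite_subset) simp
qed

lemma finite_range_fm_tp:
  assumes "voc_finite \<tau>"
  shows "finite V1 \<Longrightarrow> finite V2 \<Longrightarrow>
    finite (range (\<lambda>(M :: ('a,'r,'c) struc, v, V). fm_tp L k \<tau> V1 V2 M v V))"
proof (induction k arbitrary: V1 V2)
  case 0
  show ?case
  proof (rule finite_range_if_determined_by)
    have "range (\<lambda>(M :: ('a,'r,'c) struc, v, V). atomic_tp \<tau> V1 V2 M v V) \<subseteq> Pow (atoms \<tau> V1 V2)"
      by (auto simp: atomic_tp_def)
    then show "finite (range (\<lambda>(M :: ('a,'r,'c) struc, v, V). atomic_tp \<tau> V1 V2 M v V))"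
      using finite_atoms[OF assms 0] by (meson finite_Pow_iff finite_subset)
  qed (clarsimp split: prod.splits, metis fm_tp_0_eq_if_atomic_tp_eq)
next
  case (Suc j)
  obtain x0 where x0: "x0 \<notin> V1" using Suc.prems(1) ex_new_if_finite[OF infinite_UNIV_nat] by blast
  obtain X0 where X0: "X0 \<notin> V2" using Suc.prems(2) ex_new_if_finite[OF infinite_UNIV_nat] by blast
  let ?R1 = "range (\<lambda>(M :: ('a,'r,'c) struc, v, V). fm_tp L j \<tau> (insert x0 V1) V2 M v V)"
  let ?R2 = "range (\<lambda>(M :: ('a,'r,'c) struc, v, V). fm_tp L j \<tau> V1 (insert X0 V2) M v V)"
  have "finite ?R1" "finite ?R2" using Suc.IH Suc.prems by simp_all
  show ?case
  proof (rule finite_range_if_determined_by)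
    let ?F = "\<lambda>(M :: ('a,'r,'c) struc, v, V). (atomic_tp \<tau> V1 V2 M v V,
       fo_extension_tps L j \<tau> V1 V2 x0 M v V, so_extension_tps L j \<tau> V1 V2 X0 M v V)"
    have "range ?F \<subseteq> Pow (atoms \<tau> V1 V2) \<times> Pow (insert x0 V1 \<times> ?R1) \<times> Pow (insert X0 V2 \<times> ?R2)"
    proof
      fix y assume "y \<in> range ?F"
      then obtain M v V where y: "y = ?F (M, v, V)" by auto
      have "fo_extension_tps L j \<tau> V1 V2 x0 M v V \<subseteq> insert x0 V1 \<times> ?R1"
        unfolding fo_extension_tps_def by (auto intro: rev_image_eqI[of "(M, v(_ := _), V)"])
      moreover have "so_extension_tps L j \<tau> V1 V2 X0 M v V \<subseteq> insert X0 V2 \<times> ?R2"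
        unfolding so_extension_tps_def by (auto intro: rev_image_eqI[of "(M, v, V(_ := _))"])
      ultimately show "y \<in> Pow (atoms \<tau> V1 V2) \<times> Pow (insert x0 V1 \<times> ?R1) \<times> Pow (insert X0 V2 \<times> ?R2)"
        using y by (auto simp: atomic_tp_def)
    qed
    then show "finite (range ?F)"
      using finite_atoms[OF assms Suc.prems] \<open>finite ?R1\<close> \<open>finite ?R2\<close> Suc.prems
      by (meson finite_Pow_iff finite_SigmaI finite_insert finite_subset)
  qed (clarsimp split: prod.splits, metis fm_tp_Suc_eq_if_extension_tps_eq[OF x0 X0])
qed

lemma finite_range_tp:
  assumes "voc_finite \<tau>"
  shows "finite (range (tp L k \<tau> :: ('a,'r,'c) struc \<Rightarrow> _))"
proof -
  have "tp L k \<tau> M = fm_tp L k \<tau> {} {} M (\<lambda>_. undefined) (\<lambda>_. {})" for M :: "('a,'r,'c) struc"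
    by (auto simp: tp_def fm_tp_def is_sentence_def in_fragment_def models_def)
  then have "range (tp L k \<tau> :: ('a,'r,'c) struc \<Rightarrow> _) \<subseteq>
      range (\<lambda>(M :: ('a,'r,'c) struc, v, V). fm_tp L k \<tau> {} {} M v V)"
    by (auto intro: rev_image_eqI)
  then show ?thesis using finite_range_fm_tp[OF assms, of "{}" "{}" L k] finite_subset by auto
qed

lemma models_conj_list: "models N (conj_list \<phi>s) = (\<forall>\<phi>\<in>set \<phi>s. models N \<phi>)"
  by (induction \<phi>s) (auto simp: models_def)

lemma models_disj_list: "models N (disj_list \<phi>s) = (\<exists>\<phi>\<in>set \<phi>s. models N \<phi>)"
  by (induction \<phi>s) (auto simp: models_def)

lemma is_sentence_conj_list:
  "\<forall>\<phi>\<in>set \<phi>s. is_sentence L k \<tau> \<phi> \<Longrightarrow> is_sentence L k \<tau> (conj_list \<phi>s)"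
  by (induction \<phi>s) (auto simp: is_sentence_def in_logic_def)

lemma is_sentence_disj_list:
  "\<forall>\<phi>\<in>set \<phi>s. is_sentence L k \<tau> \<phi> \<Longrightarrow> is_sentence L k \<tau> (disj_list \<phi>s)"
  by (induction \<phi>s) (auto simp: is_sentence_def in_logic_def)

lemma type_sentence_models: "type_sentence L k \<tau> M \<chi> \<Longrightarrow> models M \<chi>"
  unfolding type_sentence_def by (auto simp: models_conj_list tp_def)

lemma type_sentence_is_sentence: "type_sentence L k \<tau> M \<chi> \<Longrightarrow> is_sentence L k \<tau> \<chi>"
  unfolding type_sentence_def by (auto intro!: is_sentence_conj_list simp: tp_def)

lemma type_sentence_tp_cong:
  fixes M M' :: "('a,'r,'c) struc"
  shows "tp L k \<tau> M = tp L k \<tau> M' \<Longrightarrow> type_sentence L k \<tau> M \<chi> = type_sentence L k \<tau> M' \<chi>"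
  by (simp add: type_sentence_def)

text \<open>Types are closed under negation, so two distinct types can always be told apart by a
  sentence of the first one.\<close>

lemma tp_neq_imp_separating_sentence:
  assumes "tp L k \<tau> M \<noteq> tp L k \<tau> N"
  obtains \<phi> where "\<phi> \<in> tp L k \<tau> M" "\<phi> \<notin> tp L k \<tau> N"
proof (cases "tp L k \<tau> M \<subseteq> tp L k \<tau> N")
  case True
  then obtain \<phi> where "\<phi> \<in> tp L k \<tau> N" "\<phi> \<notin> tp L k \<tau> M" using assms by blast
  then have "Neg \<phi> \<in> tp L k \<tau> M" "Neg \<phi> \<notin> tp L k \<tau> N"
    by (auto simp: tp_def is_sentence_def in_logic_def models_def)
  then show ?thesis by (rule that)
qed (use that in blast)

lemma ex_type_sentence:
  fixes M :: "('a,'r,'c) struc"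
  assumes "voc_finite \<tau>"
  shows "\<exists>\<chi>. type_sentence L k \<tau> M \<chi>"
proof -
  let ?Ty = "range (tp L k \<tau> :: ('a,'r,'c) struc \<Rightarrow> _)"
  define sep where "sep t = (SOME \<phi>. \<phi> \<in> tp L k \<tau> M \<and> \<phi> \<notin> t)" for t
  have sep: "sep (tp L k \<tau> N) \<in> tp L k \<tau> M \<and> sep (tp L k \<tau> N) \<notin> tp L k \<tau> N"
    if "tp L k \<tau> N \<noteq> tp L k \<tau> M" for N :: "('a,'r,'c) struc"
    unfolding sep_def
    by (rule someI_ex) (metis that tp_neq_imp_separating_sentence)
  obtain \<phi>s where \<phi>s: "set \<phi>s = sep ` (?Ty - {tp L k \<tau> M})"
    using finite_list finite_range_tp[OF assms] by (metis finite_Diff finite_imageI)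
  have "tp L k \<tau> N = tp L k \<tau> M" if "models N (conj_list \<phi>s)" for N :: "('a,'r,'c) struc"
  proof (rule ccontr)
    assume ne: "tp L k \<tau> N \<noteq> tp L k \<tau> M"
    then have "sep (tp L k \<tau> N) \<in> set \<phi>s" using \<phi>s by auto
    then have "models N (sep (tp L k \<tau> N))" using that by (simp add: models_conj_list)
    then show False using sep[OF ne] by (auto simp: tp_def)
  qed
  moreover have "set \<phi>s \<subseteq> tp L k \<tau> M" using \<phi>s sep by auto
  ultimately show ?thesis unfolding type_sentence_def by blast
qed

lemma ex_is_psi:
  fixes A B :: "('a,'r,'c) struc"
  assumes "voc_finite (voc_union \<sigma> \<sigma>')"
  shows "\<exists>\<psi>. is_psi L k \<sigma> \<sigma>' D C A B \<psi>"
proof -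
  let ?\<tau> = "voc_union \<sigma> \<sigma>'"
  let ?E = "\<lambda>p. expand \<sigma> (fst p) (snd p)"
  let ?flip = "is_flip L k \<sigma> \<sigma>' D C (A, B)"
  let ?Ty = "{tp L k ?\<tau> (?E p) | p. ?flip p}"
  define rep where "rep t = (SOME \<chi>. \<exists>p. ?flip p \<and> tp L k ?\<tau> (?E p) = t \<and> type_sentence L k ?\<tau> (?E p) \<chi>)"
    for t
  have rep: "\<exists>p'. ?flip p' \<and> tp L k ?\<tau> (?E p') = tp L k ?\<tau> (?E p)
      \<and> type_sentence L k ?\<tau> (?E p') (rep (tp L k ?\<tau> (?E p)))" if "?flip p" for p
    unfolding rep_def by (rule someI_ex) (use that ex_type_sentence[OF assms] in blast)
  have "finite ?Ty"
    by (rule finite_subset[OF _ finite_range_tp[OF assms, of L k]]) auto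
  then have "finite (rep ` ?Ty)" by (rule finite_imageI)
  then obtain \<chi>s where \<chi>s: "set \<chi>s = rep ` ?Ty" by (rule finite_list[THEN exE])
  have "\<exists>\<chi>\<in>set \<chi>s. type_sentence L k ?\<tau> (?E p) \<chi>" if "?flip p" for p
  proof
    show "rep (tp L k ?\<tau> (?E p)) \<in> set \<chi>s" using \<chi>s that by blast
    show "type_sentence L k ?\<tau> (?E p) (rep (tp L k ?\<tau> (?E p)))"
      using rep[OF that] type_sentence_tp_cong by metis
  qed
  moreover have "\<exists>p. ?flip p \<and> type_sentence L k ?\<tau> (?E p) \<chi>" if \<chi>: "\<chi> \<in> set \<chi>s" for \<chi>
  proof -
    obtain p where p: "?flip p" and "\<chi> = rep (tp L k ?\<tau> (?E p))"
      using \<chi> unfolding \<chi>s by blast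
    then show ?thesis using rep[OF p] by auto
  qed
  ultimately show ?thesis
    unfolding is_psi_def by (intro exI[of _ "disj_list \<chi>s"] exI[of _ \<chi>s] conjI refl) simp_all
qed

section \<open>Flips\<close>

lemma is_struc_expand:
  "is_struc \<sigma> A \<Longrightarrow> is_struc \<sigma>' B \<Longrightarrow> sdom A = sdom B \<Longrightarrow>
    is_struc (voc_union \<sigma> \<sigma>') (expand \<sigma> A B)"
  unfolding is_struc_def expand_def voc_union_def rels_def consts_of_def by auto

lemma is_flip_admissible:
  assumes "is_flip L k \<sigma> \<sigma>' D C p0 p" "admissible \<sigma> D C p0"
  shows "admissible \<sigma> D C p"
  using assms(1) unfolding is_flip_def
  by (induction rule: rtranclp_induct) (auto simp: sim_k_def assms(2))

lemma is_flip_change_expansion: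
  assumes "is_flip L k \<sigma> \<sigma>' D C p0 (A', B1)" "admissible \<sigma> D C p0" "admissible \<sigma> D C (A', B2)"
  shows "is_flip L k \<sigma> \<sigma>' D C p0 (A', B2)"
proof -
  have "sim_k L k \<sigma> \<sigma>' D C (A', B1) (A', B2)"
    using is_flip_admissible[OF assms(1,2)] assms(3) by (simp add: sim_k_def)
  then show ?thesis using assms(1) unfolding is_flip_def by (rule rtranclp.rtrancl_into_rtrancl[rotated])
qed

lemma Q_of_iff_models:
  assumes "admissible \<sigma> D C p" "C_invariant \<sigma> D C \<phi>"
  shows "fst p \<in> Q_of \<sigma> D C \<phi> \<longleftrightarrow> models (expand \<sigma> (fst p) (snd p)) \<phi>"
proof
  assume "fst p \<in> Q_of \<sigma> D C \<phi>"
  then obtain B' where "B' \<in> C" "sdom B' = sdom (fst p)" "models (expand \<sigma> (fst p) B') \<phi>"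
    unfolding Q_of_def by blast
  then show "models (expand \<sigma> (fst p) (snd p)) \<phi>"
    using assms unfolding C_invariant_def admissible_def by metis
qed (use assms(1) in \<open>auto simp: Q_of_def admissible_def\<close>)

lemma is_flip_models_iff:
  assumes "is_flip L k \<sigma> \<sigma>' D C p0 p" "admissible \<sigma> D C p0"
    and "is_sentence L k (voc_union \<sigma> \<sigma>') \<phi>" "C_invariant \<sigma> D C \<phi>"
  shows "models (expand \<sigma> (fst p0) (snd p0)) \<phi> \<longleftrightarrow> models (expand \<sigma> (fst p) (snd p)) \<phi>"
  using assms(1) unfolding is_flip_def
proof (induction rule: rtranclp_induct)
  case (step q r)
  then have q: "admissible \<sigma> D C q" and r: "admissible \<sigma> D C r" by (auto simp: sim_k_def)
  have "models (expand \<sigma> (fst q) (snd q)) \<phi> \<longleftrightarrow> models (expand \<sigma> (fst r) (snd r)) \<phi>"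
  proof (cases "fst q = fst r")
    case True
    then show ?thesis using Q_of_iff_models[OF q assms(4)] Q_of_iff_models[OF r assms(4)] by simp
  next
    case False
    then have "tp L k (voc_union \<sigma> \<sigma>') (expand \<sigma> (fst q) (snd q))
        = tp L k (voc_union \<sigma> \<sigma>') (expand \<sigma> (fst r) (snd r))"
      using step.hyps(2) by (simp add: sim_k_def)
    then show ?thesis using assms(3) unfolding tp_def by blast
  qed
  then show ?case using step.IH by simp
qed simp

lemma inv_tp_eq_if_is_flip:
  assumes "is_flip L k \<sigma> \<sigma>' D C (A, B) (A', B')" "admissible \<sigma> D C (A, B)"
  shows "inv_tp L k \<sigma> \<sigma>' D C A = inv_tp L k \<sigma> \<sigma>' D C A'"
proof -
  have "A \<in> Q_of \<sigma> D C \<phi> \<longleftrightarrow> A' \<in> Q_of \<sigma> D C \<phi>"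
    if "is_sentence L k (voc_union \<sigma> \<sigma>') \<phi>" "C_invariant \<sigma> D C \<phi>" for \<phi>
    using Q_of_iff_models[OF assms(2) that(2)] is_flip_models_iff[OF assms that]
      Q_of_iff_models[OF is_flip_admissible[OF assms] that(2)] by simp
  then show ?thesis unfolding inv_tp_def by blast
qed

lemma is_sentence_psi:
  "is_psi L k \<sigma> \<sigma>' D C A B \<psi> \<Longrightarrow> is_sentence L k (voc_union \<sigma> \<sigma>') \<psi>"
  unfolding is_psi_def by (auto intro!: is_sentence_disj_list dest: type_sentence_is_sentence)

context
  fixes L k \<sigma> \<sigma>' and D C :: "('a,'r,'c) struc set" and A B \<psi>
  assumes \<psi>: "is_psi L k \<sigma> \<sigma>' D C A B \<psi>"
    and D: "\<forall>A\<in>D. is_struc \<sigma> A" and C: "\<forall>B\<in>C. is_struc \<sigma>' B"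
    and AB: "admissible \<sigma> D C (A, B)"
begin

lemma models_psi_iff_is_flip:
  assumes A'B': "admissible \<sigma> D C (A', B')"
  shows "models (expand \<sigma> A' B') \<psi> \<longleftrightarrow> is_flip L k \<sigma> \<sigma>' D C (A, B) (A', B')"
proof -
  let ?\<tau> = "voc_union \<sigma> \<sigma>'"
  let ?E = "\<lambda>p. expand \<sigma> (fst p) (snd p)"
  obtain \<chi>s where \<psi>_eq: "\<psi> = disj_list \<chi>s"
    and sound: "\<forall>\<chi>\<in>set \<chi>s. \<exists>p. is_flip L k \<sigma> \<sigma>' D C (A, B) p \<and> type_sentence L k ?\<tau> (?E p) \<chi>"
    and complete: "\<forall>p. is_flip L k \<sigma> \<sigma>' D C (A, B) p \<longrightarrow> (\<exists>\<chi>\<in>set \<chi>s. type_sentence L k ?\<tau> (?E p) \<chi>)"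
    using \<psi> unfolding is_psi_def by blast
  show ?thesis
  proof
    assume "models (expand \<sigma> A' B') \<psi>"
    then obtain \<chi> where \<chi>: "\<chi> \<in> set \<chi>s" "models (expand \<sigma> A' B') \<chi>"
      unfolding \<psi>_eq models_disj_list by blast
    obtain p where p: "is_flip L k \<sigma> \<sigma>' D C (A, B) p" "type_sentence L k ?\<tau> (?E p) \<chi>"
      using sound \<chi>(1) by blast
    moreover have "is_struc ?\<tau> (expand \<sigma> A' B')"
      using A'B' D C by (intro is_struc_expand) (auto simp: admissible_def)
    ultimately have "tp L k ?\<tau> (expand \<sigma> A' B') = tp L k ?\<tau> (?E p)"
      using \<chi>(2) unfolding type_sentence_def by auto
    then have "sim_k L k \<sigma> \<sigma>' D C p (A', B')"
      using is_flip_admissible[OF p(1) AB] A'B' by (simp add: sim_k_def)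
    then show "is_flip L k \<sigma> \<sigma>' D C (A, B) (A', B')"
      using p(1) unfolding is_flip_def by (rule rtranclp.rtrancl_into_rtrancl[rotated])
  next
    assume "is_flip L k \<sigma> \<sigma>' D C (A, B) (A', B')"
    then show "models (expand \<sigma> A' B') \<psi>"
      using complete type_sentence_models unfolding \<psi>_eq models_disj_list by fastforce
  qed
qed

lemma C_invariant_psi: "C_invariant \<sigma> D C \<psi>"
  unfolding C_invariant_def
proof (intro ballI impI)
  fix A' B1 B2 assume "A' \<in> D" "B1 \<in> C" "B2 \<in> C" "sdom B1 = sdom A'" "sdom B2 = sdom A'"
  then have B1: "admissible \<sigma> D C (A', B1)" and B2: "admissible \<sigma> D C (A', B2)"
    by (auto simp: admissible_def)
  then have "is_flip L k \<sigma> \<sigma>' D C (A, B) (A', B1) \<longleftrightarrow> is_flip L k \<sigma> \<sigma>' D C (A, B) (A', B2)"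
    using is_flip_change_expansion[OF _ AB] by blast
  then show "models (expand \<sigma> A' B1) \<psi> \<longleftrightarrow> models (expand \<sigma> A' B2) \<psi>"
    using models_psi_iff_is_flip[OF B1] models_psi_iff_is_flip[OF B2] by simp
qed

lemma inv_tp_eq_iff_in_Q_of_psi:
  "inv_tp L k \<sigma> \<sigma>' D C A = inv_tp L k \<sigma> \<sigma>' D C A' \<longleftrightarrow> A' \<in> Q_of \<sigma> D C \<psi>"
proof
  assume eq: "inv_tp L k \<sigma> \<sigma>' D C A = inv_tp L k \<sigma> \<sigma>' D C A'"
  have "models (expand \<sigma> A B) \<psi>" using models_psi_iff_is_flip[OF AB] by (simp add: is_flip_def)
  then have "A \<in> Q_of \<sigma> D C \<psi>" using Q_of_iff_models[OF AB C_invariant_psi] by simp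
  then have "\<psi> \<in> inv_tp L k \<sigma> \<sigma>' D C A"
    using is_sentence_psi[OF \<psi>] C_invariant_psi by (simp add: inv_tp_def)
  then show "A' \<in> Q_of \<sigma> D C \<psi>" using eq unfolding inv_tp_def by blast
next
  assume "A' \<in> Q_of \<sigma> D C \<psi>"
  then obtain B' where B': "admissible \<sigma> D C (A', B')" "models (expand \<sigma> A' B') \<psi>"
    unfolding Q_of_def admissible_def by auto
  then have "is_flip L k \<sigma> \<sigma>' D C (A, B) (A', B')" using models_psi_iff_is_flip[OF B'(1)] by simp
  then show "inv_tp L k \<sigma> \<sigma>' D C A = inv_tp L k \<sigma> \<sigma>' D C A'"
    by (rule inv_tp_eq_if_is_flip[OF _ AB])
qed

end

theorem proposition3p2:
  fixes L :: logic and k :: nat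
    and \<sigma> \<sigma>' :: "('r,'c) voc"
    and D C :: "('a,'r,'c) struc set"
    and A B :: "('a,'r,'c) struc"
  assumes "voc_finite \<sigma>" and "voc_finite \<sigma>'" and "voc_disjoint \<sigma> \<sigma>'"
    and "\<forall>A\<in>D. is_struc \<sigma> A" and "\<forall>B\<in>C. is_struc \<sigma>' B"
    and "A \<in> D" and "B \<in> C" and "sdom A = sdom B"
  shows "(\<forall>A'\<in>D. \<forall>B'\<in>C. sdom A' = sdom B' \<longrightarrow>
            (models (expand \<sigma> A' B') (psi L k \<sigma> \<sigma>' D C A B)
               \<longleftrightarrow> is_flip L k \<sigma> \<sigma>' D C (A, B) (A', B')))
       \<and> is_sentence L k (voc_union \<sigma> \<sigma>') (psi L k \<sigma> \<sigma>' D C A B)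
       \<and> C_invariant \<sigma> D C (psi L k \<sigma> \<sigma>' D C A B)
       \<and> (\<forall>A'\<in>D. inv_tp L k \<sigma> \<sigma>' D C A = inv_tp L k \<sigma> \<sigma>' D C A'
                    \<longleftrightarrow> A' \<in> Q_of \<sigma> D C (psi L k \<sigma> \<sigma>' D C A B))"
proof -
  have "voc_finite (voc_union \<sigma> \<sigma>')"
    using assms(1,2) by (auto simp: voc_finite_def voc_union_def rels_def consts_of_def)
  then have \<psi>: "is_psi L k \<sigma> \<sigma>' D C A B (psi L k \<sigma> \<sigma>' D C A B)"
    unfolding psi_def by (rule someI_ex[OF ex_is_psi])
  have AB: "admissible \<sigma> D C (A, B)" using assms(6-8) by (simp add: admissible_def)
  note facts = models_psi_iff_is_flip[OF \<psi> assms(4,5) AB] is_sentence_psi[OF \<psi>]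
    C_invariant_psi[OF \<psi> assms(4,5) AB] inv_tp_eq_iff_in_Q_of_psi[OF \<psi> assms(4,5) AB]
  show ?thesis using facts by (simp add: admissible_def)
qed

end
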